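(* Fix $u\in W^{1,\gamma}(\Omega)$ and let $\mathcal{K}=\{(m,h)\in L^{\beta+1}(\Omega)\times L^{\gamma'}(\Gamma_D): m\ge0,\ h\ge0\}$. Then there exists a unique pair $(m_u,h_u)\in\mathcal{K}$ such that \[ \langle A_u(m_u,h_u),\,(\mu-m_u,\,k-h_u)\rangle\ge0\qquad\text{for all }(\mu,k)\in\mathcal{K}. \]
   Context: Setting. $\Omega\subset\mathbb{R}^d$ is open, bounded, connected, with $C^1$ boundary $\Gamma=\partial\Omega$; $ds$ denotes the surface measure $d\mathcal{H}^{d-1}$. $\Gamma=\overline{\Gamma_D\cup\Gamma_N}$, where $\Gamma_D,\Gamma_N$ are disjoint, nonempty, relatively open $C^1$ $(d-1)$-dimensional manifolds of positive $\mathcal{H}^{d-1}$-measure with $\mathcal{H}^{d-1}(\partial\Gamma_D\cap\partial\Gamma_N)=0$. Boundary values of Sobolev functions are traces. Exponents: $\alpha>1$, $\beta>0$, $\gamma=\frac{\beta+1}{\beta}\alpha$, $\gamma'=\gamma/(\gamma-1)$. Data: $j\in L^{\gamma'}(\Gamma_N)$, $j\ge0$, $j\not\equiv0$. $g:[0,\infty)\to\mathbb{R}$ is continuous and strictly increasing, and there is $C>1$ with $C^{-1}m^\beta-C\le g(m)\le Cm^\beta+C$ for all $m\ge0$. $H:\overline\Omega\times\mathbb{R}^d\to\mathbb{R}$ is measurable in $x$, and for a.e. $x$, $H(x,\cdot)\in C^1(\mathbb{R}^d)$ is convex; there is $C>1$ such that for a.e. $x\in\Omega$ and all $p\in\mathbb{R}^d$: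 $|D_pH(x,p)|\le C|p|^{\alpha-1}+C$, $H(x,0)\le C$, and one of the following holds: (a) $H(x,p)\ge C^{-1}|p|^\alpha-C$; (b) $D_pH(x,p)\cdot p\ge C^{-1}|p|^\alpha-C$ and $H(x,p)\ge -C$; (c) $-H(x,p)+D_pH(x,p)\cdot p\ge C^{-1}|p|^\alpha-C$ and $H(x,p)\ge-C$. Auxiliary operator. For fixed $u\in W^{1,\gamma}(\Omega)$, $A_u:L^{\beta+1}(\Omega)\times L^{\gamma'}(\Gamma_D)\to L^{\frac{\beta+1}{\beta}}(\Omega)\times L^\gamma(\Gamma_D)$ is defined (for nonnegative $(m,h)$) by \[\langle A_u(m,h),(\mu,k)\rangle=\int_\Omega(-H(x,Du)+g(m))\mu\,dx+\int_{\Gamma_D}(-u+h^{\gamma'-1})k\,ds.\] *)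

theory Defs
  imports "HOL-Analysis.Analysis"
begin

definition hausdorff_pre :: "nat \<Rightarrow> real \<Rightarrow> 'a::euclidean_space set \<Rightarrow> ennreal" where
  "hausdorff_pre s \<delta> A =
     (INF C \<in> {C :: nat \<Rightarrow> 'a set. A \<subseteq> (\<Union>i. C i) \<and> (\<forall>i. diameter (C i) \<le> \<delta>)}.
        (\<Sum>i. (if C i = {} then 0
               else ennreal (unit_ball_vol (real s) * (diameter (C i) / 2) ^ s))))"

definition hausdorff_outer :: "nat \<Rightarrow> 'a::euclidean_space set \<Rightarrow> ennreal" where
  "hausdorff_outer s A = (SUP \<delta> \<in> {0<..}. hausdorff_pre s \<delta> A)"

definition hausdorff_measure :: "nat \<Rightarrow> 'a::euclidean_space measure" where
  "hausdorff_measure s = measure_of UNIV (sets borel) (hausdorff_outer s)"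

definition surface :: "'a::euclidean_space set \<Rightarrow> 'a measure" where
  "surface S = restrict_space (hausdorff_measure (DIM('a) - 1)) S"

definition Lp_fun :: "'b measure \<Rightarrow> real \<Rightarrow> ('b \<Rightarrow> real) \<Rightarrow> bool" where
  "Lp_fun M p f \<longleftrightarrow> f \<in> borel_measurable M \<and> integrable M (\<lambda>x. \<bar>f x\<bar> powr p)"

definition Lp_vec :: "'b measure \<Rightarrow> real \<Rightarrow> ('b \<Rightarrow> 'a::euclidean_space) \<Rightarrow> bool" where
  "Lp_vec M p f \<longleftrightarrow> f \<in> borel_measurable M \<and> integrable M (\<lambda>x. norm (f x) powr p)"

definition C1_boundary :: "'a::euclidean_space set \<Rightarrow> bool" where
  "C1_boundary \<Omega> \<longleftrightarrow>
    (\<forall>x\<in>frontier \<Omega>. \<exists>r>0. \<exists>n::'a. \<exists>\<psi>::'a \<Rightarrow> real. \<exists>\<psi>'::'a \<Rightarrow> 'a.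
       norm n = 1 \<and> (\<forall>y. (\<psi> has_derivative (\<lambda>v. \<psi>' y \<bullet> v)) (at y)) \<and> continuous_on UNIV \<psi>' \<and>
       \<Omega> \<inter> ball x r = {y \<in> ball x r. y \<bullet> n > \<psi> (y - (y \<bullet> n) *\<^sub>R n)})"

definition weak_gradient :: "'a::euclidean_space set \<Rightarrow> ('a \<Rightarrow> real) \<Rightarrow> ('a \<Rightarrow> 'a) \<Rightarrow> bool" where
  "weak_gradient \<Omega> u Du \<longleftrightarrow>
    (\<forall>(\<phi>::'a \<Rightarrow> real) (\<phi>'::'a \<Rightarrow> 'a).
       (\<forall>x. (\<phi> has_derivative (\<lambda>v. \<phi>' x \<bullet> v)) (at x)) \<and> continuous_on UNIV \<phi>' \<and>
       compact (closure {x. \<phi> x \<noteq> 0}) \<and> closure {x. \<phi> x \<noteq> 0} \<subseteq> \<Omega> \<longrightarrow>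
       (\<forall>i\<in>Basis. integral\<^sup>L (lebesgue_on \<Omega>) (\<lambda>x. u x * (\<phi>' x \<bullet> i))
                  = - integral\<^sup>L (lebesgue_on \<Omega>) (\<lambda>x. (Du x \<bullet> i) * \<phi> x)))"

definition sobolev :: "'a::euclidean_space set \<Rightarrow> real \<Rightarrow> ('a \<Rightarrow> real) \<Rightarrow> ('a \<Rightarrow> 'a) \<Rightarrow> bool" where
  "sobolev \<Omega> p u Du \<longleftrightarrow>
     Lp_fun (lebesgue_on \<Omega>) p u \<and> Lp_vec (lebesgue_on \<Omega>) p Du \<and> weak_gradient \<Omega> u Du"

definition has_trace :: "'a::euclidean_space set \<Rightarrow> real \<Rightarrow> ('a \<Rightarrow> real) \<Rightarrow> ('a \<Rightarrow> 'a)
    \<Rightarrow> ('a \<Rightarrow> real) \<Rightarrow> bool" where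
  "has_trace \<Omega> p u Du Tu \<longleftrightarrow>
    Lp_fun (surface (frontier \<Omega>)) p Tu \<and>
    (\<exists>(\<phi>::nat \<Rightarrow> 'a \<Rightarrow> real) (\<phi>'::nat \<Rightarrow> 'a \<Rightarrow> 'a).
       (\<forall>n x. (\<phi> n has_derivative (\<lambda>v. \<phi>' n x \<bullet> v)) (at x)) \<and> (\<forall>n. continuous_on UNIV (\<phi>' n)) \<and>
       (\<lambda>n. integral\<^sup>L (lebesgue_on \<Omega>) (\<lambda>x. \<bar>\<phi> n x - u x\<bar> powr p)) \<longlonglongrightarrow> 0 \<and>
       (\<lambda>n. integral\<^sup>L (lebesgue_on \<Omega>) (\<lambda>x. norm (\<phi>' n x - Du x) powr p)) \<longlonglongrightarrow> 0 \<and>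
       (\<lambda>n. integral\<^sup>L (surface (frontier \<Omega>)) (\<lambda>x. \<bar>\<phi> n x - Tu x\<bar> powr p)) \<longlonglongrightarrow> 0)"

text \<open>pairing_A ... m h mu k = < A_u(m,h), (mu,k) >, where u enters through its weak gradient Du
  (in H(x,Du)) and its trace Tu (on Gamma_D).\<close>
definition pairing_A :: "'a::euclidean_space set \<Rightarrow> 'a set \<Rightarrow> ('a \<Rightarrow> 'a \<Rightarrow> real) \<Rightarrow> (real \<Rightarrow> real)
    \<Rightarrow> real \<Rightarrow> ('a \<Rightarrow> 'a) \<Rightarrow> ('a \<Rightarrow> real)
    \<Rightarrow> ('a \<Rightarrow> real) \<Rightarrow> ('a \<Rightarrow> real) \<Rightarrow> ('a \<Rightarrow> real) \<Rightarrow> ('a \<Rightarrow> real) \<Rightarrow> real" where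
  "pairing_A \<Omega> \<Gamma>D H g \<gamma>' Du Tu m h \<mu> k =
     integral\<^sup>L (lebesgue_on \<Omega>) (\<lambda>x. (- H x (Du x) + g (m x)) * \<mu> x)
   + integral\<^sup>L (surface \<Gamma>D) (\<lambda>x. (- Tu x + h x powr (\<gamma>' - 1)) * k x)"

definition K_set :: "'a::euclidean_space set \<Rightarrow> 'a set \<Rightarrow> real \<Rightarrow> real
    \<Rightarrow> (('a \<Rightarrow> real) \<times> ('a \<Rightarrow> real)) set" where
  "K_set \<Omega> \<Gamma>D \<beta> \<gamma>' = {(m, h).
      Lp_fun (lebesgue_on \<Omega>) (\<beta> + 1) m \<and> (AE x in lebesgue_on \<Omega>. m x \<ge> 0) \<and>
      Lp_fun (surface \<Gamma>D) \<gamma>' h \<and> (AE x in surface \<Gamma>D. h x \<ge> 0)}"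

end

theory Submission
  imports Defs
begin

text \<open>Testing with \<open>\<mu> = m\<close> or with \<open>k = h\<close> decouples the inequality for \<open>A\<^sub>u\<close> into two
  scalar obstacle problems: one in \<open>\<Omega>\<close> for \<open>m\<close>, with the increasing function \<open>g\<close> and the data
  \<open>H(x, Du)\<close>, and one on \<open>\<Gamma>\<^sub>D\<close> for \<open>h\<close>, with \<open>t \<mapsto> t\<^bsup>\<gamma>'-1\<^esup>\<close> and the trace of \<open>u\<close>.
  For a strictly increasing \<open>\<psi>\<close> such a problem is equivalent to the pointwise
  complementarity condition \<open>v \<ge> 0\<close>, \<open>\<psi> v \<ge> c\<close>, \<open>\<psi> v = c\<close> where \<open>v > 0\<close>, whose unique
  solution is \<open>\<psi>\<^sup>-\<^sup>1 (max c (\<psi> 0))\<close>; so \<open>m = g\<^sup>-\<^sup>1 (max (H(x, Du)) (g 0))\<close> and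
  \<open>h = (u\<^sup>+)\<^bsup>\<gamma>-1\<^esup>\<close> on \<open>\<Gamma>\<^sub>D\<close>. Complementarity integrates to the inequality. Conversely,
  raising \<open>v\<close> by \<open>1\<close>, or setting it to \<open>0\<close>, on a set of finite measure where the data are
  bounded gives admissible test functions, and these recover complementarity almost
  everywhere. The growth of \<open>g\<close> and \<open>H\<close> puts \<open>m\<close> into \<open>L\<^bsup>\<beta>+1\<^esup>\<close>, and \<open>h\<^bsup>\<gamma>'\<^esup> = (u\<^sup>+)\<^bsup>\<gamma>\<^esup>\<close>
  is integrable.\<close>

section \<open>Pointwise complementarity\<close>

definition complementarity :: "(real \<Rightarrow> real) \<Rightarrow> real \<Rightarrow> real \<Rightarrow> bool" where
  "complementarity \<psi> c v \<longleftrightarrow> 0 \<le> v \<and> c \<le> \<psi> v \<and> (0 < v \<longrightarrow> \<psi> v = c)"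

lemma complementarity_unique:
  assumes \<psi>: "strict_mono_on {0..} \<psi>"
    and v: "complementarity \<psi> c v" and w: "complementarity \<psi> c w"
  shows "v = w"
proof -
  have "\<psi> v = \<psi> w"
    using v w strict_mono_onD[OF \<psi>, of 0 v] strict_mono_onD[OF \<psi>, of 0 w]
    unfolding complementarity_def by (smt (verit) atLeast_iff)
  then show ?thesis
    using v w strict_mono_on_imp_inj_on[OF \<psi>] unfolding complementarity_def by (auto dest: inj_onD)
qed

lemma complementarity_imp_mult_nonneg:
  assumes "complementarity \<psi> c v" and "0 \<le> k"
  shows "0 \<le> (- c + \<psi> v) * (k - v)"
  using assms unfolding complementarity_def
  by (cases "v = 0") auto

lemma complementarity_powr:
  assumes "0 < e"
  shows "complementarity (\<lambda>t. t powr e) c (max c 0 powr (1 / e))"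
  using assms unfolding complementarity_def by (auto simp: powr_powr)

text \<open>The \<open>SOME\<close> is only meaningful under the assumptions of the following context.\<close>

definition clamped_inverse :: "(real \<Rightarrow> real) \<Rightarrow> real \<Rightarrow> real" where
  "clamped_inverse g y = (SOME t. 0 \<le> t \<and> g t = max y (g 0))"

context
  fixes g :: "real \<Rightarrow> real"
  assumes g_cont: "continuous_on {0..} g" and g_mono: "strict_mono_on {0..} g"
    and g_unbounded: "\<And>y. \<exists>b\<ge>0. y \<le> g b"
begin

lemma clamped_inverse: "0 \<le> clamped_inverse g y \<and> g (clamped_inverse g y) = max y (g 0)"
proof -
  obtain b where "0 \<le> b" "max y (g 0) \<le> g b" using g_unbounded[of "max y (g 0)"] by blast
  moreover have "continuous_on {0..b} g" using g_cont by (rule continuous_on_subset) auto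
  ultimately have "\<exists>t. 0 \<le> t \<and> g t = max y (g 0)"
    using IVT'[of g 0 "max y (g 0)" b] by force
  then show ?thesis unfolding clamped_inverse_def by (rule someI_ex)
qed

lemma complementarity_clamped_inverse: "complementarity g y (clamped_inverse g y)"
  using clamped_inverse[of y] strict_mono_onD[OF g_mono, of 0 "clamped_inverse g y"]
  unfolding complementarity_def by auto

lemma mono_clamped_inverse: "mono (clamped_inverse g)"
proof (rule monoI, rule ccontr)
  fix y z :: real assume "y \<le> z" and "\<not> clamped_inverse g y \<le> clamped_inverse g z"
  then have "g (clamped_inverse g z) < g (clamped_inverse g y)"
    using clamped_inverse[of z] by (intro strict_mono_onD[OF g_mono]) auto
  with \<open>y \<le> z\<close> clamped_inverse[of y] clamped_inverse[of z] show False by auto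
qed

end

lemma exists_ge_of_powr_lower_bound:
  fixes g :: "real \<Rightarrow> real"
  assumes \<beta>: "0 < \<beta>" and C: "0 < C" and g_growth: "\<And>t. 0 \<le> t \<Longrightarrow> t powr \<beta> / C - C \<le> g t"
  shows "\<exists>b\<ge>0. y \<le> g b"
proof -
  define b where "b = (C * (\<bar>y\<bar> + C)) powr (1 / \<beta>)"
  have "b powr \<beta> = C * (\<bar>y\<bar> + C)"
    unfolding b_def using \<beta> C by (simp add: powr_powr)
  moreover have "0 \<le> b" unfolding b_def by simp
  ultimately have "y \<le> g b" using C g_growth[of b] by simp
  with \<open>0 \<le> b\<close> show ?thesis by blast
qed

section \<open>Variational inequalities tested on sets of finite measure\<close>

lemma AE_not_in_if_integral_nonpos:
  fixes f :: "'a \<Rightarrow> real"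
  assumes E[measurable]: "E \<in> sets M" "emeasure M E < \<infinity>"
    and f[measurable]: "f \<in> borel_measurable M"
    and f_pos: "\<And>x. x \<in> E \<Longrightarrow> 0 < f x \<and> f x \<le> B"
    and int_nonpos: "integral\<^sup>L M (\<lambda>x. indicator E x * f x) \<le> 0"
  shows "AE x in M. x \<notin> E"
proof -
  have int: "integrable M (\<lambda>x. indicator E x * f x)"
  proof (rule Bochner_Integration.integrable_bound[where f="\<lambda>x. B * indicator E x"])
    show "AE x in M. norm (indicator E x * f x) \<le> norm (B * indicator E x)"
      using f_pos by (intro AE_I2) (force simp: indicator_def)
  qed (use E in auto)
  have nonneg: "AE x in M. 0 \<le> indicator E x * f x"
    using f_pos by (auto simp: indicator_def less_imp_le)
  have "integral\<^sup>L M (\<lambda>x. indicator E x * f x) = 0"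
    using int_nonpos integral_nonneg_AE[OF nonneg] by linarith
  then have "AE x in M. indicator E x * f x = 0"
    using integral_nonneg_eq_0_iff_AE[OF int nonneg] by simp
  then show ?thesis
    by (rule eventually_mono) (use f_pos in \<open>fastforce simp: indicator_def\<close>)
qed

lemma Lp_fun_modify_on_finite_set:
  assumes v: "Lp_fun M p v" and p: "0 \<le> p"
    and E[measurable]: "E \<in> sets M" "emeasure M E < \<infinity>"
    and k[measurable]: "k \<in> borel_measurable M"
    and k_out: "\<And>x. x \<notin> E \<Longrightarrow> k x = v x" and k_in: "\<And>x. x \<in> E \<Longrightarrow> \<bar>k x\<bar> \<le> B"
  shows "Lp_fun M p k"
  unfolding Lp_fun_def
proof (intro conjI k)
  show "integrable M (\<lambda>x. \<bar>k x\<bar> powr p)"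
  proof (rule Bochner_Integration.integrable_bound
      [where f="\<lambda>x. \<bar>v x\<bar> powr p + B powr p * indicator E x"])
    show "integrable M (\<lambda>x. \<bar>v x\<bar> powr p + B powr p * indicator E x)"
      using v E by (simp add: Lp_fun_def)
    show "AE x in M. norm (\<bar>k x\<bar> powr p) \<le> norm (\<bar>v x\<bar> powr p + B powr p * indicator E x)"
    proof (intro AE_I2)
      fix x
      show "norm (\<bar>k x\<bar> powr p) \<le> norm (\<bar>v x\<bar> powr p + B powr p * indicator E x)"
      proof (cases "x \<in> E")
        case True
        then have "\<bar>k x\<bar> powr p \<le> B powr p" using k_in p by (intro powr_mono2) auto
        then show ?thesis using True by (simp add: add_increasing)
      qed (simp add: k_out)
    qed
  qed measurable
qed

context
  fixes M :: "'a measure" and p :: real and \<phi> v :: "'a \<Rightarrow> real"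
  assumes \<phi>[measurable]: "\<phi> \<in> borel_measurable M"
    and v: "Lp_fun M p v" "AE x in M. 0 \<le> v x" and p: "0 \<le> p"
    and vi: "\<And>k. Lp_fun M p k \<Longrightarrow> AE x in M. 0 \<le> k x \<Longrightarrow>
               0 \<le> integral\<^sup>L M (\<lambda>x. \<phi> x * (k x - v x))"
begin

lemma vi_raise_null:
  assumes E[measurable]: "E \<in> sets M" "emeasure M E < \<infinity>"
    and on_E: "\<And>x. x \<in> E \<Longrightarrow> \<phi> x < 0 \<and> \<bar>\<phi> x\<bar> \<le> N \<and> \<bar>v x\<bar> \<le> N"
  shows "AE x in M. x \<notin> E"
proof (rule AE_not_in_if_integral_nonpos[OF E, where f="\<lambda>x. - \<phi> x" and B=N])
  have v_meas[measurable]: "v \<in> borel_measurable M" using v by (simp add: Lp_fun_def)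
  have "Lp_fun M p (\<lambda>x. v x + indicator E x)"
    by (rule Lp_fun_modify_on_finite_set[OF v(1) p E, where B="N + 1"])
       (auto simp: indicator_def abs_le_iff dest: on_E)
  moreover have "AE x in M. 0 \<le> v x + indicator E x" using v(2) by eventually_elim simp
  ultimately have "0 \<le> integral\<^sup>L M (\<lambda>x. \<phi> x * (v x + indicator E x - v x))" by (rule vi)
  then show "integral\<^sup>L M (\<lambda>x. indicator E x * - \<phi> x) \<le> 0" by (simp add: mult.commute)
qed (use on_E in \<open>auto simp: abs_le_iff\<close>)

lemma vi_lower_null:
  assumes E[measurable]: "E \<in> sets M" "emeasure M E < \<infinity>"
    and on_E: "\<And>x. x \<in> E \<Longrightarrow> 0 < v x \<and> 0 < \<phi> x \<and> \<phi> x \<le> N \<and> v x \<le> N"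
  shows "AE x in M. x \<notin> E"
proof (rule AE_not_in_if_integral_nonpos[OF E, where f="\<lambda>x. \<phi> x * v x" and B="N * N"])
  have v_meas[measurable]: "v \<in> borel_measurable M" using v by (simp add: Lp_fun_def)
  have "Lp_fun M p (\<lambda>x. indicator (- E) x * v x)"
    by (rule Lp_fun_modify_on_finite_set[OF v(1) p E, where B=0]) (auto simp: indicator_def)
  moreover have "AE x in M. 0 \<le> indicator (- E) x * v x" using v(2) by eventually_elim simp
  ultimately have "0 \<le> integral\<^sup>L M (\<lambda>x. \<phi> x * (indicator (- E) x * v x - v x))" by (rule vi)
  moreover have "(\<lambda>x. \<phi> x * (indicator (- E) x * v x - v x)) = (\<lambda>x. - (indicator E x * (\<phi> x * v x)))"
    by (auto simp: indicator_def)
  ultimately show "integral\<^sup>L M (\<lambda>x. indicator E x * (\<phi> x * v x)) \<le> 0" by simp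
  show "0 < \<phi> x * v x \<and> \<phi> x * v x \<le> N * N" if "x \<in> E" for x
    using on_E[OF that] by (auto intro: mult_mono)
qed (use v in \<open>auto simp: Lp_fun_def intro!: borel_measurable_times\<close>)

lemma vi_complementarity_on_bounded_set:
  assumes E[measurable]: "E \<in> sets M" "emeasure M E < \<infinity>"
    and bounded: "\<And>x. x \<in> E \<Longrightarrow> \<bar>\<phi> x\<bar> \<le> N \<and> \<bar>v x\<bar> \<le> N"
  shows "AE x in M. x \<in> E \<longrightarrow> 0 \<le> \<phi> x \<and> (0 < v x \<longrightarrow> \<phi> x = 0)"
proof -
  have v_meas[measurable]: "v \<in> borel_measurable M" using v by (simp add: Lp_fun_def)
  have finite: "emeasure M {x \<in> E. P x} < \<infinity>" for P
    by (rule le_less_trans[OF emeasure_mono E(2)]) auto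
  have "AE x in M. x \<notin> {x \<in> E. \<phi> x < 0}"
    by (rule vi_raise_null[OF _ finite]) (auto dest: bounded)
  moreover have "AE x in M. x \<notin> {x \<in> E. 0 < v x \<and> 0 < \<phi> x}"
    by (rule vi_lower_null[OF _ finite]) (auto dest: bounded)
  ultimately show ?thesis by eventually_elim auto
qed

text \<open>The sets \<open>G N\<close> below exhaust \<open>{\<phi> < 0} \<union> {v > 0}\<close> up to a null set; they have
  finite measure by Markov's inequality for \<open>w + \<bar>v\<bar>\<^sup>p\<close>, so the perturbations of
  \<open>vi_complementarity_on_bounded_set\<close> are admissible on each of them.\<close>

lemma vi_imp_complementarity_AE:
  fixes w :: "'a \<Rightarrow> real"
  assumes w: "integrable M w" "\<And>x. 0 \<le> w x"
    and neg_in_support: "AE x in M. \<phi> x < 0 \<longrightarrow> 0 < w x"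
  shows "AE x in M. 0 \<le> \<phi> x \<and> (0 < v x \<longrightarrow> \<phi> x = 0)"
proof -
  define u where "u = (\<lambda>x. w x + \<bar>v x\<bar> powr p)"
  have u_int: "integrable M u" using v w(1) unfolding u_def Lp_fun_def by simp
  then have [measurable]: "u \<in> borel_measurable M" by (rule borel_measurable_integrable)
  define G where "G N = {x \<in> space M. \<bar>\<phi> x\<bar> \<le> real N \<and> \<bar>v x\<bar> \<le> real N \<and>
    inverse (real (Suc N)) \<le> u x}" for N
  have v_meas[measurable]: "v \<in> borel_measurable M" using v by (simp add: Lp_fun_def)
  have G_sets[measurable]: "G N \<in> sets M" for N unfolding G_def by measurable
  have "emeasure M (G N) < \<infinity>" for N
  proof -
    have "emeasure M (G N) \<le> emeasure M {x \<in> space M. inverse (real (Suc N)) \<le> u x}"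
      by (rule emeasure_mono) (auto simp: G_def)
    also have "\<dots> \<le> ennreal (integral\<^sup>L M u / inverse (real (Suc N)))"
      using integral_Markov_inequality[OF u_int _, of "inverse (real (Suc N))"] w(2)
      by (simp add: u_def)
    finally show ?thesis by (simp add: le_less_trans)
  qed
  then have "AE x in M. x \<in> G N \<longrightarrow> 0 \<le> \<phi> x \<and> (0 < v x \<longrightarrow> \<phi> x = 0)" for N
    by (intro vi_complementarity_on_bounded_set[OF G_sets]) (auto simp: G_def)
  then have "AE x in M. \<forall>N. x \<in> G N \<longrightarrow> 0 \<le> \<phi> x \<and> (0 < v x \<longrightarrow> \<phi> x = 0)"
    by (subst AE_all_countable) blast
  with neg_in_support AE_space show ?thesis
  proof eventually_elim
    case (elim x)
    have "0 < u x" if "\<phi> x < 0 \<or> 0 < v x"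
      using that elim(1) w(2)[of x] unfolding u_def by (auto intro: add_pos_nonneg add_nonneg_pos)
    define N where "N = nat \<lceil>max (max \<bar>\<phi> x\<bar> \<bar>v x\<bar>) (1 / u x)\<rceil>"
    have N: "max (max \<bar>\<phi> x\<bar> \<bar>v x\<bar>) (1 / u x) \<le> real N"
      unfolding N_def by (rule real_nat_ceiling_ge)
    then have "x \<in> G N" if "0 < u x"
      using that elim(2) unfolding G_def by (auto simp: field_simps)
    then show ?case using \<open>\<phi> x < 0 \<or> 0 < v x \<Longrightarrow> 0 < u x\<close> elim(3) by fastforce
  qed
qed

end

section \<open>Scalar obstacle problems\<close>

definition solves_obstacle_vi ::
    "'a measure \<Rightarrow> real \<Rightarrow> (real \<Rightarrow> real) \<Rightarrow> ('a \<Rightarrow> real) \<Rightarrow> ('a \<Rightarrow> real) \<Rightarrow> bool" where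
  "solves_obstacle_vi M p \<psi> c v \<longleftrightarrow> Lp_fun M p v \<and> (AE x in M. 0 \<le> v x) \<and>
     (\<forall>k. Lp_fun M p k \<and> (AE x in M. 0 \<le> k x) \<longrightarrow>
        0 \<le> integral\<^sup>L M (\<lambda>x. (- c x + \<psi> (v x)) * (k x - v x)))"

lemma solves_obstacle_vi_if_complementarity:
  assumes "Lp_fun M p v" and compl: "AE x in M. complementarity \<psi> (c x) (v x)"
  shows "solves_obstacle_vi M p \<psi> c v"
  unfolding solves_obstacle_vi_def
proof (intro conjI allI impI assms(1))
  show "AE x in M. 0 \<le> v x" using compl by (rule eventually_mono) (simp add: complementarity_def)
  fix k assume "Lp_fun M p k \<and> (AE x in M. 0 \<le> k x)"
  then have "AE x in M. 0 \<le> k x" ..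
  with compl have "AE x in M. 0 \<le> (- c x + \<psi> (v x)) * (k x - v x)"
    by eventually_elim (rule complementarity_imp_mult_nonneg)
  then show "0 \<le> integral\<^sup>L M (\<lambda>x. (- c x + \<psi> (v x)) * (k x - v x))"
    by (rule integral_nonneg_AE)
qed

text \<open>The weight \<open>w\<close> only serves to cover \<open>{\<psi> 0 < c}\<close> by sets of finite measure;
  on a finite measure space \<open>w = 1\<close> will do.\<close>

lemma solves_obstacle_vi_unique:
  fixes w :: "'a \<Rightarrow> real"
  assumes sol: "solves_obstacle_vi M p \<psi> c v" and p: "0 \<le> p"
    and \<psi>: "strict_mono_on {0..} \<psi>"
    and meas[measurable]: "(\<lambda>x. \<psi> (v x)) \<in> borel_measurable M" "c \<in> borel_measurable M"
    and w: "integrable M w" "\<And>x. 0 \<le> w x" "AE x in M. \<psi> 0 < c x \<longrightarrow> 0 < w x"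
    and v0: "AE x in M. complementarity \<psi> (c x) (v0 x)"
  shows "AE x in M. v x = v0 x"
proof -
  have v: "Lp_fun M p v" "AE x in M. 0 \<le> v x" using sol by (auto simp: solves_obstacle_vi_def)
  have "AE x in M. - c x + \<psi> (v x) < 0 \<longrightarrow> 0 < w x"
    using v(2) w(3)
  proof eventually_elim
    case (elim x)
    then show ?case using strict_mono_on_leD[OF \<psi>, of 0 "v x"] by auto
  qed
  with v sol have "AE x in M. 0 \<le> - c x + \<psi> (v x) \<and> (0 < v x \<longrightarrow> - c x + \<psi> (v x) = 0)"
    by (intro vi_imp_complementarity_AE[OF _ v p _ w(1,2)]) (auto simp: solves_obstacle_vi_def)
  with v(2) v0 show ?thesis
  proof eventually_elim
    case (elim x)
    then have "complementarity \<psi> (c x) (v x)" by (auto simp: complementarity_def)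
    from this elim(2) show ?case by (rule complementarity_unique[OF \<psi>])
  qed
qed

lemma powr_le_of_le_affine_powr:
  fixes X t A a e :: real
  assumes "0 \<le> X" "0 \<le> t" "0 \<le> e" and X_le: "X \<le> A * (1 + t powr a)"
  shows "X powr e \<le> (2 * A) powr e * (1 + t powr (e * a))"
proof -
  define s where "s = max 1 (t powr a)"
  have "0 \<le> A * (1 + t powr a)" using X_le assms(1) by linarith
  moreover have "0 < 1 + t powr a" by (simp add: add_pos_nonneg)
  ultimately have "0 \<le> A" by (simp add: zero_le_mult_iff)
  moreover have "1 + t powr a \<le> 2 * s" unfolding s_def by linarith
  ultimately have "X \<le> 2 * A * s"
    using X_le mult_left_mono[of "1 + t powr a" "2 * s" A] by simp
  then have "X powr e \<le> (2 * A * s) powr e" using assms by (intro powr_mono2) auto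
  also have "\<dots> = (2 * A) powr e * s powr e"
    using \<open>X \<le> 2 * A * s\<close> assms(1) unfolding s_def
    by (intro powr_mult)
  also have "s powr e \<le> 1 + t powr (e * a)"
    unfolding s_def by (cases "t powr a \<le> 1") (auto simp: powr_powr mult.commute)
  then have "(2 * A) powr e * s powr e \<le> (2 * A) powr e * (1 + t powr (e * a))"
    by (intro mult_left_mono) auto
  finally show ?thesis .
qed

lemma borel_measurable_lebesgue_on_AE_cong:
  fixes f g :: "'a::euclidean_space \<Rightarrow> real"
  assumes \<Omega>: "\<Omega> \<in> sets lebesgue" and f: "f \<in> borel_measurable (lebesgue_on \<Omega>)"
    and f_eq_g: "AE x in lebesgue_on \<Omega>. f x = g x"
  shows "g \<in> borel_measurable (lebesgue_on \<Omega>)"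
proof -
  have \<Omega>': "\<Omega> \<inter> space lebesgue \<in> sets lebesgue" using \<Omega> by simp
  have "(\<lambda>x. indicator \<Omega> x *\<^sub>R f x) \<in> borel_measurable lebesgue"
    using f unfolding borel_measurable_restrict_space_iff[OF \<Omega>'] .
  moreover have "AE x in lebesgue. indicator \<Omega> x *\<^sub>R f x = indicator \<Omega> x *\<^sub>R g x"
    using f_eq_g unfolding AE_restrict_space_iff[OF \<Omega>']
    by (rule eventually_mono) (auto simp: indicator_def)
  ultimately have "(\<lambda>x. indicator \<Omega> x *\<^sub>R g x) \<in> borel_measurable lebesgue"
    by (rule borel_measurable_AE)
  then show ?thesis
    unfolding borel_measurable_restrict_space_iff[OF \<Omega>'] .
qed

lemma Lp_fun_clamped_inverse:
  fixes g :: "real \<Rightarrow> real" and c :: "'a \<Rightarrow> real"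
  assumes M: "finite_measure M" and \<beta>: "0 < \<beta>"
    and g: "continuous_on {0..} g" "strict_mono_on {0..} g"
    and C: "0 < C" and g_growth: "\<And>t. 0 \<le> t \<Longrightarrow> t powr \<beta> / C - C \<le> g t"
    and c[measurable]: "c \<in> borel_measurable M"
    and c_int: "integrable M (\<lambda>x. \<bar>c x\<bar> powr ((\<beta> + 1) / \<beta>))"
  shows "Lp_fun M (\<beta> + 1) (\<lambda>x. clamped_inverse g (c x))"
proof -
  note g_unbounded = exists_ge_of_powr_lower_bound[OF \<beta> C g_growth]
  note clamped = clamped_inverse[OF g g_unbounded]
  define m where "m x = clamped_inverse g (c x)" for x
  have [measurable]: "clamped_inverse g \<in> borel_measurable borel"
    by (rule borel_measurable_mono[OF mono_clamped_inverse[OF g g_unbounded]])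
  define A where "A = C * (1 + \<bar>g 0\<bar> + C)"
  have "m x powr \<beta> \<le> A * (1 + \<bar>c x\<bar> powr 1)" for x
  proof -
    have "m x powr \<beta> \<le> C * (g (m x) + C)"
      using C g_growth[of "m x"] clamped[of "c x"] by (simp add: m_def field_simps)
    also have "\<dots> \<le> C * (\<bar>c x\<bar> + \<bar>g 0\<bar> + C)"
      using C clamped[of "c x"] by (intro mult_left_mono) (auto simp: m_def)
    also have "\<dots> \<le> A * (1 + \<bar>c x\<bar> powr 1)"
      using C mult_nonneg_nonneg[of "\<bar>g 0\<bar> + C" "\<bar>c x\<bar>"]
      unfolding A_def by (simp add: algebra_simps)
    finally show ?thesis .
  qed
  then have "m x powr (\<beta> + 1) \<le> (2 * A) powr ((\<beta> + 1) / \<beta>) * (1 + \<bar>c x\<bar> powr ((\<beta> + 1) / \<beta>))"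
    for x
    using powr_le_of_le_affine_powr[of "m x powr \<beta>" "\<bar>c x\<bar>" "(\<beta> + 1) / \<beta>" A 1] \<beta>
    by (simp add: powr_powr)
  moreover have "0 \<le> m x" for x using clamped by (simp add: m_def)
  ultimately have "AE x in M. norm (\<bar>m x\<bar> powr (\<beta> + 1))
      \<le> norm ((2 * A) powr ((\<beta> + 1) / \<beta>) * (1 + \<bar>c x\<bar> powr ((\<beta> + 1) / \<beta>)))"
    by (intro AE_I2) (simp add: add_nonneg_nonneg)
  then have "integrable M (\<lambda>x. \<bar>m x\<bar> powr (\<beta> + 1))"
  proof (rule Bochner_Integration.integrable_bound[rotated 2])
    show "integrable M (\<lambda>x. (2 * A) powr ((\<beta> + 1) / \<beta>) * (1 + \<bar>c x\<bar> powr ((\<beta> + 1) / \<beta>)))"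
      by (intro integrable_mult_right Bochner_Integration.integrable_add
          finite_measure.integrable_const[OF M] c_int)
  qed (simp add: m_def)
  then show ?thesis unfolding Lp_fun_def m_def by simp
qed

lemma lebesgue_on_obstacle_vi_unique_solution:
  fixes \<Omega> :: "'a::euclidean_space set" and g :: "real \<Rightarrow> real" and c :: "'a \<Rightarrow> real"
  assumes \<Omega>: "\<Omega> \<in> lmeasurable" and \<beta>: "0 < \<beta>"
    and g: "continuous_on {0..} g" "strict_mono_on {0..} g"
    and g_growth: "0 < C" "\<And>t. 0 \<le> t \<Longrightarrow> t powr \<beta> / C - C \<le> g t"
    and c[measurable]: "c \<in> borel_measurable (lebesgue_on \<Omega>)"
    and c_int: "integrable (lebesgue_on \<Omega>) (\<lambda>x. \<bar>c x\<bar> powr ((\<beta> + 1) / \<beta>))"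
  shows "\<exists>m. solves_obstacle_vi (lebesgue_on \<Omega>) (\<beta> + 1) g c m \<and>
           (\<forall>m'. solves_obstacle_vi (lebesgue_on \<Omega>) (\<beta> + 1) g c m' \<longrightarrow>
              (AE x in lebesgue_on \<Omega>. m' x = m x))"
proof -
  let ?M = "lebesgue_on \<Omega>"
  have fin: "finite_measure ?M" using \<Omega> by (rule finite_measure_lebesgue_on)
  define m where "m x = clamped_inverse g (c x)" for x
  have compl: "complementarity g (c x) (m x)" for x
    unfolding m_def
    by (rule complementarity_clamped_inverse[OF g exists_ge_of_powr_lower_bound[OF \<beta> g_growth]])
  have "Lp_fun ?M (\<beta> + 1) m"
    unfolding m_def by (rule Lp_fun_clamped_inverse[OF fin \<beta> g g_growth c c_int])
  then have sol: "solves_obstacle_vi ?M (\<beta> + 1) g c m"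
    by (rule solves_obstacle_vi_if_complementarity) (simp add: compl)
  have "AE x in ?M. m' x = m x" if sol': "solves_obstacle_vi ?M (\<beta> + 1) g c m'" for m'
  proof (rule solves_obstacle_vi_unique[OF sol' _ g(2) _ c finite_measure.integrable_const[OF fin, of 1]])
    have [measurable]: "m' \<in> borel_measurable ?M"
      using sol' by (simp add: solves_obstacle_vi_def Lp_fun_def)
    have "continuous_on UNIV (\<lambda>t. g (max t 0))"
      by (rule continuous_on_compose2[OF g(1)]) (auto intro!: continuous_intros)
    then have [measurable]: "(\<lambda>t. g (max t 0)) \<in> borel_measurable borel"
      by (rule borel_measurable_continuous_onI)
    show "(\<lambda>x. g (m' x)) \<in> borel_measurable ?M"
    proof (rule borel_measurable_lebesgue_on_AE_cong)
      show "AE x in ?M. g (max (m' x) 0) = g (m' x)"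
        using sol' by (auto simp: solves_obstacle_vi_def elim: eventually_mono)
    qed (use \<Omega> in auto)
  qed (use compl \<beta> in auto)
  with sol show ?thesis by blast
qed

lemma powr_obstacle_vi_unique_solution:
  fixes M :: "'a measure" and c :: "'a \<Rightarrow> real"
  assumes \<gamma>: "1 < \<gamma>" "\<gamma>' = \<gamma> / (\<gamma> - 1)" and c: "Lp_fun M \<gamma> c"
  defines "\<psi> \<equiv> \<lambda>t. t powr (\<gamma>' - 1)"
  shows "\<exists>h. solves_obstacle_vi M \<gamma>' \<psi> c h \<and>
           (\<forall>h'. solves_obstacle_vi M \<gamma>' \<psi> c h' \<longrightarrow> (AE x in M. h' x = h x))"
proof -
  have c_meas[measurable]: "c \<in> borel_measurable M" and c_int: "integrable M (\<lambda>x. \<bar>c x\<bar> powr \<gamma>)"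
    using c by (auto simp: Lp_fun_def)
  have e: "\<gamma>' - 1 = 1 / (\<gamma> - 1)" using \<gamma> by (simp add: field_simps)
  then have e': "1 / (\<gamma>' - 1) = \<gamma> - 1" "(\<gamma> - 1) * \<gamma>' = \<gamma>" using \<gamma> by simp_all
  have \<psi>_mono: "strict_mono_on {0..} \<psi>"
    unfolding \<psi>_def using \<gamma> e by (intro strict_mono_onI powr_less_mono2) auto
  define h where "h x = max (c x) 0 powr (\<gamma> - 1)" for x
  have compl: "complementarity \<psi> (c x) (h x)" for x
    using complementarity_powr[of "\<gamma>' - 1" "c x"] \<gamma> e e'(1) unfolding \<psi>_def h_def by simp
  have "Lp_fun M \<gamma>' h"
    unfolding Lp_fun_def
  proof
    show "h \<in> borel_measurable M" unfolding h_def by measurable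
    have "\<bar>h x\<bar> powr \<gamma>' = max (c x) 0 powr \<gamma>" for x
      unfolding h_def by (simp add: powr_powr e'(2))
    also have "\<dots> x \<le> \<bar>c x\<bar> powr \<gamma>" for x using \<gamma> by (intro powr_mono2) auto
    finally have "\<bar>h x\<bar> powr \<gamma>' \<le> \<bar>c x\<bar> powr \<gamma>" for x .
    with c_int show "integrable M (\<lambda>x. \<bar>h x\<bar> powr \<gamma>')"
      by (intro Bochner_Integration.integrable_bound[OF c_int]) (auto simp: h_def)
  qed
  then have sol: "solves_obstacle_vi M \<gamma>' \<psi> c h"
    by (rule solves_obstacle_vi_if_complementarity) (simp add: compl)
  have "AE x in M. h' x = h x" if sol': "solves_obstacle_vi M \<gamma>' \<psi> c h'" for h'
  proof (rule solves_obstacle_vi_unique[OF sol' _ \<psi>_mono _ c_meas c_int])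
    have [measurable]: "h' \<in> borel_measurable M"
      using sol' by (simp add: solves_obstacle_vi_def Lp_fun_def)
    then show "(\<lambda>x. \<psi> (h' x)) \<in> borel_measurable M" unfolding \<psi>_def by measurable
    show "AE x in M. \<psi> 0 < c x \<longrightarrow> 0 < \<bar>c x\<bar> powr \<gamma>" by (simp add: \<psi>_def)
  qed (use \<gamma> e compl in auto)
  with sol show ?thesis by blast
qed

section \<open>The Hamiltonian along the gradient\<close>

lemma caratheodory_AE_borel_measurable:
  fixes H :: "'a \<Rightarrow> 'b::{metric_space, second_countable_topology} \<Rightarrow> real"
  assumes H: "\<And>p. (\<lambda>x. H x p) \<in> borel_measurable M" and f: "f \<in> borel_measurable M"
    and cont: "AE x in M. isCont (H x) (f x)"
  shows "\<exists>F\<in>borel_measurable M. AE x in M. F x = H x (f x)"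
proof -
  obtain S where S: "\<And>i. simple_function M (S i)" "\<And>x. x \<in> space M \<Longrightarrow> (\<lambda>i. S i x) \<longlonglongrightarrow> f x"
    using borel_measurable_implies_sequence_metric[OF f, of undefined] by blast
  have "(\<lambda>x. H x (S i x)) \<in> borel_measurable M" for i
  proof (rule measurable_compose_countable'[where I="S i ` space M"])
    show countable: "countable (S i ` space M)"
      using simple_functionD(1)[OF S(1)] by (rule countable_finite)
    show "S i \<in> M \<rightarrow>\<^sub>M count_space (S i ` space M)"
      unfolding measurable_count_space_eq_countable[OF countable]
      using simple_functionD(2)[OF S(1)] by auto
  qed (rule H)
  then have "(\<lambda>x. lim (\<lambda>i. H x (S i x))) \<in> borel_measurable M" by measurable
  moreover have "AE x in M. lim (\<lambda>i. H x (S i x)) = H x (f x)"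
    using cont AE_space
  proof eventually_elim
    case (elim x)
    have "(\<lambda>i. H x (S i x)) \<longlonglongrightarrow> H x (f x)"
      using elim(1) S(2)[OF elim(2)] by (rule isCont_tendsto_compose)
    then show ?case by (rule limI)
  qed
  ultimately show ?thesis by (intro bexI[of _ "\<lambda>x. lim (\<lambda>i. H x (S i x))"])
qed

lemma le_of_derivative_growth:
  fixes h :: "'a::euclidean_space \<Rightarrow> real" and dh :: "'a \<Rightarrow> 'a"
  assumes h: "\<And>p. (h has_derivative (\<lambda>q. dh p \<bullet> q)) (at p)"
    and dh: "\<And>p. norm (dh p) \<le> C * norm p powr a + C" and "0 \<le> C" "0 \<le> a"
  shows "h p \<le> h 0 + (C * norm p powr a + C) * norm p"
proof -
  have "norm (h p - h 0) \<le> (C * norm p powr a + C) * norm (p - 0)"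
  proof (rule differentiable_bound[where S="cball 0 (norm p)" and f'="\<lambda>y q. dh y \<bullet> q"])
    show "(h has_derivative (\<lambda>q. dh y \<bullet> q)) (at y within cball 0 (norm p))" for y
      using h[of y] by (rule has_derivative_at_withinI)
    show "onorm (\<lambda>q. dh y \<bullet> q) \<le> C * norm p powr a + C" if "y \<in> cball 0 (norm p)" for y
    proof -
      have "onorm (\<lambda>q. dh y \<bullet> q) \<le> norm (dh y)"
        by (rule onorm_le) (simp add: Cauchy_Schwarz_ineq2)
      also have "\<dots> \<le> C * norm y powr a + C" by (rule dh)
      also have "norm y powr a \<le> norm p powr a" using that assms(4) by (intro powr_mono2) auto
      then have "C * norm y powr a + C \<le> C * norm p powr a + C"
        using assms(3) by (intro add_right_mono mult_left_mono) auto
      finally show ?thesis .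
    qed
  qed auto
  then show ?thesis by simp
qed

lemma abs_le_of_derivative_growth:
  fixes h :: "'a::euclidean_space \<Rightarrow> real" and dh :: "'a \<Rightarrow> 'a"
  assumes h: "\<And>p. (h has_derivative (\<lambda>q. dh p \<bullet> q)) (at p)"
    and dh: "\<And>p. norm (dh p) \<le> C * norm p powr (\<alpha> - 1) + C"
    and h0: "h 0 \<le> C" and h_lower: "\<And>p. - C \<le> h p" and \<alpha>: "1 < \<alpha>" and C: "0 \<le> C"
  shows "\<bar>h p\<bar> \<le> 3 * C * (1 + norm p powr \<alpha>)"
proof -
  have "norm p powr (\<alpha> - 1) * norm p = norm p powr \<alpha>"
    using powr_add[of "norm p" "\<alpha> - 1" 1] by (cases "p = 0") auto
  then have "(C * norm p powr (\<alpha> - 1) + C) * norm p = C * norm p powr \<alpha> + C * norm p"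
    by (simp add: algebra_simps)
  moreover have "norm p \<le> 1 + norm p powr \<alpha>"
  proof (cases "norm p \<le> 1")
    case False
    then have "norm p powr 1 \<le> norm p powr \<alpha>" using \<alpha> by (intro powr_mono) auto
    then show ?thesis by simp
  qed (simp add: add_increasing2)
  then have "C * norm p \<le> C * (1 + norm p powr \<alpha>)" using C by (rule mult_left_mono)
  then have "C * norm p \<le> C + C * norm p powr \<alpha>" by (simp add: algebra_simps)
  moreover have "h p \<le> h 0 + (C * norm p powr (\<alpha> - 1) + C) * norm p"
    using le_of_derivative_growth[OF h dh C] \<alpha> by simp
  moreover have "0 \<le> C * norm p powr \<alpha>" using C by simp
  ultimately have "h p \<le> 3 * C + 3 * (C * norm p powr \<alpha>)" and "- C \<le> h p"
    using h0 h_lower[of p] by linarith+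
  then show ?thesis using \<open>0 \<le> C * norm p powr \<alpha>\<close> by (simp add: abs_le_iff algebra_simps)
qed

lemma Hamiltonian_growth:
  fixes H :: "'a::euclidean_space \<Rightarrow> 'a \<Rightarrow> real" and DH :: "'a \<Rightarrow> 'a \<Rightarrow> 'a"
  assumes \<alpha>: "1 < \<alpha>"
    and Hreg: "AE x in M. convex_on UNIV (H x) \<and>
                 (\<forall>p. (H x has_derivative (\<lambda>q. DH x p \<bullet> q)) (at p)) \<and> continuous_on UNIV (DH x)"
    and Hbounds: "\<exists>C>1.
        (AE x in M. \<forall>p. norm (DH x p) \<le> C * norm p powr (\<alpha> - 1) + C \<and> H x 0 \<le> C) \<and>
        ((AE x in M. \<forall>p. H x p \<ge> norm p powr \<alpha> / C - C)
         \<or> (AE x in M. \<forall>p. DH x p \<bullet> p \<ge> norm p powr \<alpha> / C - C \<and> H x p \<ge> - C)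
         \<or> (AE x in M. \<forall>p. - H x p + DH x p \<bullet> p \<ge> norm p powr \<alpha> / C - C \<and> H x p \<ge> - C))"
  shows "\<exists>C. AE x in M. \<forall>p. \<bar>H x p\<bar> \<le> C * (1 + norm p powr \<alpha>)"
proof -
  obtain C where C: "1 < C"
    and DH: "AE x in M. \<forall>p. norm (DH x p) \<le> C * norm p powr (\<alpha> - 1) + C \<and> H x 0 \<le> C"
    and coercive: "(AE x in M. \<forall>p. H x p \<ge> norm p powr \<alpha> / C - C)
         \<or> (AE x in M. \<forall>p. DH x p \<bullet> p \<ge> norm p powr \<alpha> / C - C \<and> H x p \<ge> - C)
         \<or> (AE x in M. \<forall>p. - H x p + DH x p \<bullet> p \<ge> norm p powr \<alpha> / C - C \<and> H x p \<ge> - C)"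
    using Hbounds by blast
  have "AE x in M. \<forall>p. - C \<le> H x p"
    using coercive
  proof (elim disjE)
    assume "AE x in M. \<forall>p. H x p \<ge> norm p powr \<alpha> / C - C"
    then show ?thesis
      by (rule eventually_mono) (use C in \<open>smt (verit) divide_nonneg_pos powr_ge_zero\<close>)
  qed (auto elim: eventually_mono)
  with Hreg DH have "AE x in M. \<forall>p. \<bar>H x p\<bar> \<le> 3 * C * (1 + norm p powr \<alpha>)"
    by eventually_elim (use \<alpha> C in \<open>auto intro: abs_le_of_derivative_growth\<close>)
  then show ?thesis by blast
qed

lemma Hamiltonian_along_Lp_gradient:
  fixes \<Omega> :: "'a::euclidean_space set" and H :: "'a \<Rightarrow> 'a \<Rightarrow> real" and Du :: "'a \<Rightarrow> 'a"
  assumes \<Omega>: "\<Omega> \<in> lmeasurable" and \<alpha>: "0 \<le> \<alpha>" and q: "0 \<le> q"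
    and Hmeas: "\<forall>p. (\<lambda>x. H x p) \<in> borel_measurable (lebesgue_on \<Omega>)"
    and Hcont: "AE x in lebesgue_on \<Omega>. continuous_on UNIV (H x)"
    and growth: "AE x in lebesgue_on \<Omega>. \<forall>p. \<bar>H x p\<bar> \<le> C * (1 + norm p powr \<alpha>)"
    and Du: "Lp_vec (lebesgue_on \<Omega>) (q * \<alpha>) Du"
  shows "(\<lambda>x. H x (Du x)) \<in> borel_measurable (lebesgue_on \<Omega>)"
    and "integrable (lebesgue_on \<Omega>) (\<lambda>x. \<bar>H x (Du x)\<bar> powr q)"
proof -
  let ?M = "lebesgue_on \<Omega>"
  have Du_meas[measurable]: "Du \<in> borel_measurable ?M"
    and Du_int: "integrable ?M (\<lambda>x. norm (Du x) powr (q * \<alpha>))"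
    using Du by (auto simp: Lp_vec_def)
  have cont: "AE x in ?M. isCont (H x) (Du x)"
    using Hcont by (rule eventually_mono) (simp add: continuous_on_eq_continuous_at)
  have "(\<lambda>x. H x p) \<in> borel_measurable ?M" for p using Hmeas by blast
  from caratheodory_AE_borel_measurable[OF this Du_meas cont]
  obtain F where "F \<in> borel_measurable ?M" "AE x in ?M. F x = H x (Du x)" ..
  then show H_meas[measurable]: "(\<lambda>x. H x (Du x)) \<in> borel_measurable ?M"
    by (rule borel_measurable_lebesgue_on_AE_cong[OF fmeasurableD[OF \<Omega>]])
  show "integrable ?M (\<lambda>x. \<bar>H x (Du x)\<bar> powr q)"
  proof (rule Bochner_Integration.integrable_bound)
    show "integrable ?M (\<lambda>x. (2 * C) powr q * (1 + norm (Du x) powr (q * \<alpha>)))"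
      by (intro integrable_mult_right Bochner_Integration.integrable_add
          finite_measure.integrable_const[OF finite_measure_lebesgue_on[OF \<Omega>]] Du_int)
    show "AE x in ?M. norm (\<bar>H x (Du x)\<bar> powr q) \<le> norm ((2 * C) powr q * (1 + norm (Du x) powr (q * \<alpha>)))"
      using growth
    proof eventually_elim
      case (elim x)
      then have "\<bar>H x (Du x)\<bar> powr q \<le> (2 * C) powr q * (1 + norm (Du x) powr (q * \<alpha>))"
        using q by (intro powr_le_of_le_affine_powr) auto
      then show ?case by (simp add: add_nonneg_nonneg)
    qed
  qed measurable
qed

section \<open>Traces on a part of the boundary\<close>

lemma sets_hausdorff_measure: "sets (hausdorff_measure k :: 'a::euclidean_space measure) = sets borel"
  unfolding hausdorff_measure_def
  by (subst sets_measure_of) (auto simp: sets.sigma_sets_eq[of borel, simplified])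

lemma space_hausdorff_measure: "space (hausdorff_measure k :: 'a::euclidean_space measure) = UNIV"
  unfolding hausdorff_measure_def by (simp add: space_measure_of_conv)

lemma Lp_fun_restrict_space:
  assumes f: "Lp_fun M p f" and A: "A \<in> sets M"
  shows "Lp_fun (restrict_space M A) p f"
proof -
  have A': "A \<inter> space M \<in> sets M" using A by simp
  have "integrable M (\<lambda>x. \<bar>f x\<bar> powr p)" using f by (simp add: Lp_fun_def)
  then have "integrable (restrict_space M A) (\<lambda>x. \<bar>f x\<bar> powr p)"
    unfolding integrable_restrict_space[OF A'] by (rule integrable_mult_indicator[OF A])
  with f show ?thesis by (simp add: Lp_fun_def measurable_restrict_space1)
qed

lemma Lp_fun_surface_mono:
  fixes D F :: "'a::euclidean_space set"
  assumes f: "Lp_fun (surface F) p f" and "D \<subseteq> F" "D \<in> sets borel" "F \<in> sets borel"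
  shows "Lp_fun (surface D) p f"
proof -
  let ?H = "hausdorff_measure (DIM('a) - 1) :: 'a measure"
  have "surface D = restrict_space (restrict_space ?H F) D"
    using assms(2-4) unfolding surface_def
    by (subst restrict_restrict_space) (auto simp: sets_hausdorff_measure space_hausdorff_measure Int_absorb1)
  moreover have "D \<in> sets (surface F)"
    using assms(2-4) unfolding surface_def sets_restrict_space
    by (auto simp: sets_hausdorff_measure image_iff intro!: bexI[of _ D])
  ultimately show ?thesis using Lp_fun_restrict_space[OF f] unfolding surface_def by simp
qed

lemma trace_Lp_on_boundary_part:
  assumes \<Gamma>: "openin (top_of_set (frontier \<Omega>)) \<Gamma>" and Tu: "has_trace \<Omega> p u Du Tu"
  shows "Lp_fun (surface \<Gamma>) p Tu"
proof (rule Lp_fun_surface_mono)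
  show "Lp_fun (surface (frontier \<Omega>)) p Tu" using Tu by (simp add: has_trace_def)
  obtain U where "open U" "\<Gamma> = frontier \<Omega> \<inter> U" using \<Gamma> unfolding openin_open by blast
  then show "\<Gamma> \<subseteq> frontier \<Omega>" "\<Gamma> \<in> sets borel" by auto
qed auto

section \<open>The operator \<open>A\<^sub>u\<close>\<close>

lemma pairing_A_vi_iff_solves_obstacle_vi:
  "(m, h) \<in> K_set \<Omega> \<Gamma>D \<beta> \<gamma>' \<and>
     (\<forall>\<mu> k. (\<mu>, k) \<in> K_set \<Omega> \<Gamma>D \<beta> \<gamma>' \<longrightarrow>
        pairing_A \<Omega> \<Gamma>D H g \<gamma>' Du Tu m h (\<lambda>x. \<mu> x - m x) (\<lambda>x. k x - h x) \<ge> 0)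
   \<longleftrightarrow> solves_obstacle_vi (lebesgue_on \<Omega>) (\<beta> + 1) g (\<lambda>x. H x (Du x)) m \<and>
       solves_obstacle_vi (surface \<Gamma>D) \<gamma>' (\<lambda>t. t powr (\<gamma>' - 1)) Tu h"
proof -
  define P where "P \<mu> \<longleftrightarrow> Lp_fun (lebesgue_on \<Omega>) (\<beta> + 1) \<mu> \<and> (AE x in lebesgue_on \<Omega>. 0 \<le> \<mu> x)"
    for \<mu> :: "'a \<Rightarrow> real"
  define Q where "Q k \<longleftrightarrow> Lp_fun (surface \<Gamma>D) \<gamma>' k \<and> (AE x in surface \<Gamma>D. 0 \<le> k x)"
    for k :: "'a \<Rightarrow> real"
  define I where "I \<mu> = integral\<^sup>L (lebesgue_on \<Omega>) (\<lambda>x. (- H x (Du x) + g (m x)) * (\<mu> x - m x))" for \<mu>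
  define J where "J k = integral\<^sup>L (surface \<Gamma>D) (\<lambda>x. (- Tu x + h x powr (\<gamma>' - 1)) * (k x - h x))" for k
  have "(\<mu>, k) \<in> K_set \<Omega> \<Gamma>D \<beta> \<gamma>' \<longleftrightarrow> P \<mu> \<and> Q k" for \<mu> k
    unfolding K_set_def P_def Q_def by simp
  moreover have "pairing_A \<Omega> \<Gamma>D H g \<gamma>' Du Tu m h (\<lambda>x. \<mu> x - m x) (\<lambda>x. k x - h x) = I \<mu> + J k" for \<mu> k
    unfolding pairing_A_def I_def J_def ..
  moreover have "solves_obstacle_vi (lebesgue_on \<Omega>) (\<beta> + 1) g (\<lambda>x. H x (Du x)) m \<longleftrightarrow>
      P m \<and> (\<forall>\<mu>. P \<mu> \<longrightarrow> 0 \<le> I \<mu>)"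
    unfolding solves_obstacle_vi_def P_def I_def by blast
  moreover have "solves_obstacle_vi (surface \<Gamma>D) \<gamma>' (\<lambda>t. t powr (\<gamma>' - 1)) Tu h \<longleftrightarrow>
      Q h \<and> (\<forall>k. Q k \<longrightarrow> 0 \<le> J k)"
    unfolding solves_obstacle_vi_def Q_def J_def by blast
  moreover have "I m = 0" "J h = 0" unfolding I_def J_def by simp_all
  ultimately show ?thesis by (smt (verit))
qed

theorem theorem5p1:
  fixes \<Omega> \<Gamma>D \<Gamma>N :: "'a::euclidean_space set"
    and \<alpha> \<beta> \<gamma> \<gamma>' :: real
    and j :: "'a \<Rightarrow> real"
    and g :: "real \<Rightarrow> real"
    and H :: "'a \<Rightarrow> 'a \<Rightarrow> real" and DH :: "'a \<Rightarrow> 'a \<Rightarrow> 'a"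
    and u :: "'a \<Rightarrow> real" and Du :: "'a \<Rightarrow> 'a" and Tu :: "'a \<Rightarrow> real"
  assumes dom: "open \<Omega>" "bounded \<Omega>" "connected \<Omega>" "C1_boundary \<Omega>"
    and bdry: "frontier \<Omega> = closure (\<Gamma>D \<union> \<Gamma>N)" "\<Gamma>D \<inter> \<Gamma>N = {}"
      "\<Gamma>D \<noteq> {}" "\<Gamma>N \<noteq> {}"
      "openin (top_of_set (frontier \<Omega>)) \<Gamma>D" "openin (top_of_set (frontier \<Omega>)) \<Gamma>N"
      "emeasure (hausdorff_measure (DIM('a) - 1)) \<Gamma>D > 0"
      "emeasure (hausdorff_measure (DIM('a) - 1)) \<Gamma>N > 0"
      "emeasure (hausdorff_measure (DIM('a) - 1)) ((closure \<Gamma>D - \<Gamma>D) \<inter> (closure \<Gamma>N - \<Gamma>N)) = 0"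
    and expo: "\<alpha> > 1" "\<beta> > 0" "\<gamma> = (\<beta> + 1) / \<beta> * \<alpha>" "\<gamma>' = \<gamma> / (\<gamma> - 1)"
    and jdata: "Lp_fun (surface \<Gamma>N) \<gamma>' j" "AE x in surface \<Gamma>N. j x \<ge> 0"
      "\<not> (AE x in surface \<Gamma>N. j x = 0)"
    and gcond: "continuous_on {0..} g" "strict_mono_on {0..} g"
      "\<exists>C>1. \<forall>m\<ge>0. m powr \<beta> / C - C \<le> g m \<and> g m \<le> C * m powr \<beta> + C"
    and Hmeas: "\<forall>p. (\<lambda>x. H x p) \<in> borel_measurable (lebesgue_on \<Omega>)"
    and Hreg: "AE x in lebesgue_on \<Omega>. convex_on UNIV (H x) \<and>
                 (\<forall>p. (H x has_derivative (\<lambda>q. DH x p \<bullet> q)) (at p)) \<and> continuous_on UNIV (DH x)"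
    and Hbounds: "\<exists>C>1.
        (AE x in lebesgue_on \<Omega>. \<forall>p. norm (DH x p) \<le> C * norm p powr (\<alpha> - 1) + C \<and> H x 0 \<le> C) \<and>
        ((AE x in lebesgue_on \<Omega>. \<forall>p. H x p \<ge> norm p powr \<alpha> / C - C)
         \<or> (AE x in lebesgue_on \<Omega>. \<forall>p. DH x p \<bullet> p \<ge> norm p powr \<alpha> / C - C \<and> H x p \<ge> - C)
         \<or> (AE x in lebesgue_on \<Omega>. \<forall>p. - H x p + DH x p \<bullet> p \<ge> norm p powr \<alpha> / C - C \<and> H x p \<ge> - C))"
    and u_sob: "sobolev \<Omega> \<gamma> u Du"
    and u_trace: "has_trace \<Omega> \<gamma> u Du Tu"
  shows "\<exists>m h. (m, h) \<in> K_set \<Omega> \<Gamma>D \<beta> \<gamma>' \<and>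
           (\<forall>\<mu> k. (\<mu>, k) \<in> K_set \<Omega> \<Gamma>D \<beta> \<gamma>' \<longrightarrow>
              pairing_A \<Omega> \<Gamma>D H g \<gamma>' Du Tu m h (\<lambda>x. \<mu> x - m x) (\<lambda>x. k x - h x) \<ge> 0) \<and>
           (\<forall>m' h'. (m', h') \<in> K_set \<Omega> \<Gamma>D \<beta> \<gamma>' \<and>
              (\<forall>\<mu> k. (\<mu>, k) \<in> K_set \<Omega> \<Gamma>D \<beta> \<gamma>' \<longrightarrow>
                 pairing_A \<Omega> \<Gamma>D H g \<gamma>' Du Tu m' h' (\<lambda>x. \<mu> x - m' x) (\<lambda>x. k x - h' x) \<ge> 0)
              \<longrightarrow> (AE x in lebesgue_on \<Omega>. m' x = m x) \<and> (AE x in surface \<Gamma>D. h' x = h x))"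
proof -
  have \<Omega>: "\<Omega> \<in> lmeasurable" using dom(2,1) by (rule lmeasurable_open)
  have "1 * \<alpha> < (\<beta> + 1) / \<beta> * \<alpha>"
    using expo(1,2) by (intro mult_strict_right_mono) (auto simp: field_simps)
  then have \<gamma>: "1 < \<gamma>" using expo(1,3) by linarith
  obtain Cg where "1 < Cg" "\<forall>t\<ge>0. t powr \<beta> / Cg - Cg \<le> g t \<and> g t \<le> Cg * t powr \<beta> + Cg"
    using gcond(3) by blast
  then have Cg: "0 < Cg" "\<And>t. 0 \<le> t \<Longrightarrow> t powr \<beta> / Cg - Cg \<le> g t" by auto
  obtain CH where growth: "AE x in lebesgue_on \<Omega>. \<forall>p. \<bar>H x p\<bar> \<le> CH * (1 + norm p powr \<alpha>)"
    using Hamiltonian_growth[OF expo(1) Hreg Hbounds] by blast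
  have Hcont: "AE x in lebesgue_on \<Omega>. continuous_on UNIV (H x)"
    using Hreg by (rule eventually_mono) (auto intro!: has_derivative_continuous_on)
  have "Lp_vec (lebesgue_on \<Omega>) ((\<beta> + 1) / \<beta> * \<alpha>) Du"
    using u_sob expo(3) by (simp add: sobolev_def)
  moreover have "0 \<le> \<alpha>" "0 \<le> (\<beta> + 1) / \<beta>" using expo(1,2) by auto
  ultimately have H_Du: "(\<lambda>x. H x (Du x)) \<in> borel_measurable (lebesgue_on \<Omega>)"
    "integrable (lebesgue_on \<Omega>) (\<lambda>x. \<bar>H x (Du x)\<bar> powr ((\<beta> + 1) / \<beta>))"
    using Hamiltonian_along_Lp_gradient[OF \<Omega> _ _ Hmeas Hcont growth] by auto
  note interior = lebesgue_on_obstacle_vi_unique_solution[OF \<Omega> expo(2) gcond(1,2) Cg H_Du]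
  note boundary = powr_obstacle_vi_unique_solution
    [OF \<gamma> expo(4) trace_Lp_on_boundary_part[OF bdry(5) u_trace]]
  show ?thesis
    unfolding conj_assoc[symmetric] pairing_A_vi_iff_solves_obstacle_vi
    using interior boundary by blast
qed

end
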